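(* In the model described in the context, if $(\tilde y_0^+,\tilde y_0^-)=(0,1)$ (deterministically), then $$\Pr(W_2)-\Pr(W_1) = \tfrac12 G\Big(1 - a^{m-1}\big(1-\rho' + m\rho' + \rho'\tfrac{1-q'}{q'}\big)\Big),$$ and this quantity is positive for all sufficiently large $m$.
   Context: Model. Fix an integer $m\ge 2$, and reals $1>\rho>q>0$, $0\le\nu<\tfrac12$. A sample consists of ground-truth labels $y_0,y_1,\dots,y_m\in\{0,1\}$ and noisy labels $\tilde y_0,\dots,\tilde y_m\in\{0,1\}$. Given $y_0$, the labels $y_1,\dots,y_m$ are conditionally independent with $\Pr(y_i=1\mid y_0=1)=\rho$ and $\Pr(y_i=1\mid y_0=0)=q$ for $i\in\{1,\dots,m\}$. For $i\in\{1,\dots,m\}$, $\tilde y_i = 1-y_i$ with probability $\nu$ and $\tilde y_i=y_i$ otherwise, the flips being independent of each other and of everything else. A positive sample has $y_0=1$ and a negative sample has $y_0=0$; we draw one positive sample (superscript $+$) and one negative sample (superscript $-$) independently. The pair $(\tilde y_0^+,\tilde y_0^-)\in\{0,1\}^2$ has an arbitrary distribution, independent of all $y_i^\pm,\tilde y_i^\pm$ with $i\ge1$. Fix $\delta>0$. For each sample set $\bar s_{0,i} := \max(\tilde y_0,\tilde y_i)+\delta\min(\tilde y_0,\tilde y_i)$ for $i=1,\dots,m$, and let $\bar r_1\ge \bar r_2$ be the largest and second largest elements of $\{\bar s_{0,1},\dots,\bar s_{0,m}\}$ (as a multiset). Notation: $\rho' := (1-\nu)\rho+\nu(1-\rho)$,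 $q':=(1-\nu)q+\nu(1-q)$, $a:=1-\rho'$, $\gamma := \frac{1-q'}{1-\rho'}$, $A := m(1-a)a^{m-1}$, $G := m(1-\gamma a)(\gamma a)^{m-1}$. For $k\in\{1,2\}$, $\Pr(W_k) := \Pr(\bar r_k^+>\bar r_k^-) + \tfrac12\Pr(\bar r_k^+=\bar r_k^-)$. *)

theory Defs
  imports "HOL-Probability.Probability"
begin

text \<open>One coordinate i >= 1 of a sample:
  ground truth y_i ~ Bernoulli(p) (p = rho for a positive sample, p = q for a negative one),
  flip indicator ~ Bernoulli(nu), independent; the result is the pair (y_i, noisy y_i).\<close>
definition label_pmf :: "real \<Rightarrow> real \<Rightarrow> (nat \<times> nat) pmf" where
  "label_pmf p \<nu> = do {
     y \<leftarrow> bernoulli_pmf p;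
     f \<leftarrow> bernoulli_pmf \<nu>;
     return_pmf (of_bool y, if f then 1 - of_bool y else of_bool y) }"

definition labels_pmf :: "nat \<Rightarrow> real \<Rightarrow> real \<Rightarrow> (nat \<times> nat) list pmf" where
  "labels_pmf m p \<nu> = replicate_pmf m (label_pmf p \<nu>)"

definition sbar :: "real \<Rightarrow> nat \<Rightarrow> nat \<Rightarrow> real" where
  "sbar \<delta> t0 ti = real (max t0 ti) + \<delta> * real (min t0 ti)"

definition kth_largest :: "nat \<Rightarrow> real list \<Rightarrow> real" where
  "kth_largest k xs = rev (sort xs) ! (k - 1)"

text \<open>r_k for one sample: t0 = noisy y_0, ls = [(y_i, noisy y_i) | i = 1..m].\<close>
definition rbar :: "real \<Rightarrow> nat \<Rightarrow> nat \<Rightarrow> (nat \<times> nat) list \<Rightarrow> real" where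
  "rbar \<delta> k t0 ls = kth_largest k (map (\<lambda>l. sbar \<delta> t0 (snd l)) ls)"

text \<open>Joint distribution of (r_k^+, r_k^-): D is the distribution of (noisy y_0^+, noisy y_0^-),
  independent of the positive sample (y_0 = 1, rate rho) and negative sample (y_0 = 0, rate q).\<close>
definition rpair_pmf :: "(nat \<times> nat) pmf \<Rightarrow> nat \<Rightarrow> real \<Rightarrow> real \<Rightarrow> real \<Rightarrow> real \<Rightarrow> nat
    \<Rightarrow> (real \<times> real) pmf" where
  "rpair_pmf D m \<rho> q \<nu> \<delta> k = do {
     t \<leftarrow> D;
     lp \<leftarrow> labels_pmf m \<rho> \<nu>;
     ln \<leftarrow> labels_pmf m q \<nu>;
     return_pmf (rbar \<delta> k (fst t) lp, rbar \<delta> k (snd t) ln) }"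

definition PrW :: "(nat \<times> nat) pmf \<Rightarrow> nat \<Rightarrow> real \<Rightarrow> real \<Rightarrow> real \<Rightarrow> real \<Rightarrow> nat \<Rightarrow> real" where
  "PrW D m \<rho> q \<nu> \<delta> k =
     measure_pmf.prob (rpair_pmf D m \<rho> q \<nu> \<delta> k) {x. fst x > snd x}
     + 1/2 * measure_pmf.prob (rpair_pmf D m \<rho> q \<nu> \<delta> k) {x. fst x = snd x}"

definition noisy_rate :: "real \<Rightarrow> real \<Rightarrow> real" where
  "noisy_rate \<nu> p = (1 - \<nu>) * p + \<nu> * (1 - p)"

definition G_val :: "nat \<Rightarrow> real \<Rightarrow> real \<Rightarrow> real \<Rightarrow> real" where
  "G_val m \<rho> q \<nu> =
     (let a = 1 - noisy_rate \<nu> \<rho>; \<gamma> = (1 - noisy_rate \<nu> q) / (1 - noisy_rate \<nu> \<rho>)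
      in real m * (1 - \<gamma> * a) * (\<gamma> * a) ^ (m - 1))"

end

theory Submission
  imports Defs
begin

text \<open>With noisy y_0^+ = 0 and noisy y_0^- = 1, every score of the positive sample lies in
  {0, 1} and every score of the negative sample in {1, 1 + \<delta>}. Hence r_k^+ > r_k^- never
  happens, and r_k^+ = r_k^- = 1 exactly when the positive sample has at least k noisy ones
  and the negative sample fewer than k. The numbers of noisy ones are independent
  binomial variables with rates \<rho>' and q', so
  Pr(W_k) = 1/2 Pr(Bin(m, \<rho>') \<ge> k) Pr(Bin(m, q') < k), and for k = 1, 2 this is an
  explicit polynomial. Positivity for large m follows from m a^(m-1) \<rightarrow> 0.\<close>

lemma sort_two_valued:
  fixes u v :: "'a::linorder"
  assumes "set xs \<subseteq> {u, v}" "u < v"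
  shows "sort xs = replicate (length (filter (\<lambda>x. x = u) xs)) u
                 @ replicate (length (filter (\<lambda>x. x = v) xs)) v"
proof (rule properties_for_sort)
  show "mset (replicate (length (filter (\<lambda>x. x = u) xs)) u
              @ replicate (length (filter (\<lambda>x. x = v) xs)) v) = mset xs"
    using assms by (induction xs) (auto simp: add_mset_commute)
  show "sorted (replicate (length (filter (\<lambda>x. x = u) xs)) u
                @ replicate (length (filter (\<lambda>x. x = v) xs)) v)"
    using assms(2) by (auto simp: sorted_append)
qed

lemma kth_largest_two_valued:
  fixes u v :: real
  assumes "set xs \<subseteq> {u, v}" "u < v" "1 \<le> k" "k \<le> length xs"
  shows "kth_largest k xs = (if k \<le> length (filter (\<lambda>x. x = v) xs) then v else u)"
proof -
  have "length (filter (\<lambda>x. x = u) xs) + length (filter (\<lambda>x. x = v) xs) = length xs"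
    using assms(1,2) by (induction xs) auto
  then show ?thesis
    unfolding kth_largest_def sort_two_valued[OF assms(1,2)] using assms(3,4)
    by (auto simp: nth_append)
qed

lemma noisy_rate_bounds:
  assumes "0 \<le> p" "p \<le> 1" "0 \<le> \<nu>" "\<nu> \<le> 1"
  shows "noisy_rate \<nu> p \<in> {0..1}"
  using assms convex_bound_le[of p 1 "1 - p" "1 - \<nu>" \<nu>]
  by (auto simp: noisy_rate_def)

lemma noisy_rate_strict_bounds:
  assumes "0 < p" "p < 1" "0 \<le> \<nu>" "\<nu> \<le> 1"
  shows "0 < noisy_rate \<nu> p" "noisy_rate \<nu> p < 1"
proof -
  show "noisy_rate \<nu> p < 1"
    using assms convex_bound_lt[of p 1 "1 - p" "1 - \<nu>" \<nu>] by (simp add: noisy_rate_def)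
  show "0 < noisy_rate \<nu> p"
    using assms by (cases "\<nu> = 1") (auto simp: noisy_rate_def intro: add_pos_nonneg)
qed

lemma replicate_pmf_map_pmf:
  "replicate_pmf n (map_pmf g p) = map_pmf (map g) (replicate_pmf n p)"
proof (induction n)
  case (Suc n)
  show ?case
    unfolding replicate_pmf.simps Suc.IH by (simp add: map_pmf_def bind_assoc_pmf bind_return_pmf)
qed simp

lemma map_pmf_noisy_label:
  assumes "0 \<le> p" "p \<le> 1" "0 \<le> \<nu>" "\<nu> \<le> 1"
  shows "map_pmf (\<lambda>l. snd l = 1) (label_pmf p \<nu>) = bernoulli_pmf (noisy_rate \<nu> p)"
proof (rule pmf_eqI)
  fix b :: bool
  show "pmf (map_pmf (\<lambda>l. snd l = 1) (label_pmf p \<nu>)) b = pmf (bernoulli_pmf (noisy_rate \<nu> p)) b"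
    unfolding label_pmf_def map_bind_pmf map_return_pmf
    using assms noisy_rate_bounds[OF assms]
    by (cases b) (auto simp: pmf_bind noisy_rate_def algebra_simps)
qed

lemma set_labels_pmf:
  assumes "ls \<in> set_pmf (labels_pmf m p \<nu>)"
  shows "length ls = m" "\<forall>l\<in>set ls. snd l \<in> {0, 1}"
proof -
  have "snd l \<in> {0, 1}" if "l \<in> set_pmf (label_pmf p \<nu>)" for l
    using that unfolding label_pmf_def by (auto simp: of_bool_def split: if_splits)
  then show "length ls = m" "\<forall>l\<in>set ls. snd l \<in> {0, 1}"
    using assms unfolding labels_pmf_def set_replicate_pmf by (auto simp: in_lists_conv_set)
qed

definition noisy_ones :: "(nat \<times> nat) list \<Rightarrow> nat" where
  "noisy_ones ls = length (filter (\<lambda>l. snd l = 1) ls)"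

lemma map_pmf_noisy_ones_labels_pmf:
  assumes "0 \<le> p" "p \<le> 1" "0 \<le> \<nu>" "\<nu> \<le> 1"
  shows "map_pmf noisy_ones (labels_pmf m p \<nu>) = binomial_pmf m (noisy_rate \<nu> p)"
proof -
  have "noisy_ones = (length \<circ> filter id) \<circ> map (\<lambda>l. snd l = 1)"
    by (auto simp: noisy_ones_def filter_map comp_def fun_eq_iff)
  then show ?thesis
    unfolding binomial_pmf_altdef[OF noisy_rate_bounds[OF assms]] labels_pmf_def
      map_pmf_noisy_label[OF assms, symmetric] replicate_pmf_map_pmf
    by (simp add: pmf.map_comp)
qed

lemma rbar_at_0:
  assumes "\<forall>l\<in>set ls. snd l \<in> {0, 1}" "1 \<le> k" "k \<le> length ls"
  shows "rbar \<delta> k 0 ls = (if k \<le> noisy_ones ls then 1 else 0)"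
proof -
  have "length (filter (\<lambda>x. x = 1) (map (\<lambda>l. sbar \<delta> 0 (snd l)) ls)) = noisy_ones ls"
    unfolding noisy_ones_def filter_map length_map
    by (rule arg_cong[where f = length], rule filter_cong) (auto simp: sbar_def)
  moreover have "set (map (\<lambda>l. sbar \<delta> 0 (snd l)) ls) \<subseteq> {0, 1}"
    using assms(1) by (auto simp: sbar_def)
  ultimately show ?thesis
    unfolding rbar_def using kth_largest_two_valued assms(2,3) by simp
qed

lemma rbar_at_1:
  assumes "\<forall>l\<in>set ls. snd l \<in> {0, 1}" "1 \<le> k" "k \<le> length ls" "\<delta> > 0"
  shows "rbar \<delta> k 1 ls = (if k \<le> noisy_ones ls then 1 + \<delta> else 1)"
proof -
  have "length (filter (\<lambda>x. x = 1 + \<delta>) (map (\<lambda>l. sbar \<delta> 1 (snd l)) ls)) = noisy_ones ls"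
    unfolding noisy_ones_def filter_map length_map
    by (rule arg_cong[where f = length], rule filter_cong) (use assms(1,4) in \<open>auto simp: sbar_def\<close>)
  moreover have "set (map (\<lambda>l. sbar \<delta> 1 (snd l)) ls) \<subseteq> {1, 1 + \<delta>}"
    using assms(1) by (auto simp: sbar_def)
  ultimately show ?thesis
    unfolding rbar_def using kth_largest_two_valued assms(2-4) by simp
qed

lemma rpair_pmf_binomial:
  assumes "0 \<le> \<rho>" "\<rho> \<le> 1" "0 \<le> q" "q \<le> 1" "0 \<le> \<nu>" "\<nu> \<le> 1" "\<delta> > 0" "1 \<le> k" "k \<le> m"
  shows "rpair_pmf (return_pmf (0, 1)) m \<rho> q \<nu> \<delta> k =
    map_pmf (\<lambda>(a, b). (if k \<le> a then 1 else 0, if k \<le> b then 1 + \<delta> else 1))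
      (pair_pmf (binomial_pmf m (noisy_rate \<nu> \<rho>)) (binomial_pmf m (noisy_rate \<nu> q)))"
proof -
  let ?f = "\<lambda>(a, b). (if k \<le> a then 1 else 0, if k \<le> b then 1 + \<delta> else (1::real))"
  have "rpair_pmf (return_pmf (0, 1)) m \<rho> q \<nu> \<delta> k =
      map_pmf (\<lambda>(lp, ln). (rbar \<delta> k 0 lp, rbar \<delta> k 1 ln))
        (pair_pmf (labels_pmf m \<rho> \<nu>) (labels_pmf m q \<nu>))"
    unfolding rpair_pmf_def pair_pmf_def map_pmf_def
    by (simp add: bind_return_pmf bind_assoc_pmf)
  also have "\<dots> = map_pmf (?f \<circ> (\<lambda>(lp, ln). (noisy_ones lp, noisy_ones ln)))
      (pair_pmf (labels_pmf m \<rho> \<nu>) (labels_pmf m q \<nu>))"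
    by (rule map_pmf_cong)
      (use assms set_labels_pmf rbar_at_0 rbar_at_1 in auto)
  also have "\<dots> = map_pmf ?f
      (pair_pmf (map_pmf noisy_ones (labels_pmf m \<rho> \<nu>)) (map_pmf noisy_ones (labels_pmf m q \<nu>)))"
    by (simp add: pmf.map_comp[symmetric] map_pair[symmetric])
  finally show ?thesis
    using map_pmf_noisy_ones_labels_pmf assms by simp
qed

lemma PrW_binomial:
  assumes "0 \<le> \<rho>" "\<rho> \<le> 1" "0 \<le> q" "q \<le> 1" "0 \<le> \<nu>" "\<nu> \<le> 1" "\<delta> > 0" "1 \<le> k" "k \<le> m"
  shows "PrW (return_pmf (0, 1)) m \<rho> q \<nu> \<delta> k =
    1/2 * (1 - (\<Sum>i<k. pmf (binomial_pmf m (noisy_rate \<nu> \<rho>)) i))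
        * (\<Sum>i<k. pmf (binomial_pmf m (noisy_rate \<nu> q)) i)"
proof -
  define B\<^sub>\<rho> where "B\<^sub>\<rho> = binomial_pmf m (noisy_rate \<nu> \<rho>)"
  define B\<^sub>q where "B\<^sub>q = binomial_pmf m (noisy_rate \<nu> q)"
  define f :: "nat \<times> nat \<Rightarrow> real \<times> real"
    where "f = (\<lambda>(a, b). (if k \<le> a then 1 else 0, if k \<le> b then 1 + \<delta> else 1))"
  have no_win: "f -` {x. fst x > snd x} = {}"
    using assms(7) by (auto simp: f_def split: if_splits)
  have tie: "f -` {x. fst x = snd x} = (UNIV - {..<k}) \<times> {..<k}"
    using assms(7) by (auto simp: f_def split: if_splits)
  have "measure_pmf.prob B\<^sub>\<rho> (UNIV - {..<k}) = 1 - (\<Sum>i<k. pmf B\<^sub>\<rho> i)"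
    using measure_pmf.prob_compl[of "{..<k}" B\<^sub>\<rho>] by (simp add: measure_measure_pmf_finite)
  then show ?thesis
    unfolding PrW_def rpair_pmf_binomial[OF assms] B\<^sub>\<rho>_def[symmetric] B\<^sub>q_def[symmetric]
      f_def[symmetric] measure_map_pmf no_win tie
    by (simp add: measure_pmf_prob_product measure_measure_pmf_finite)
qed

lemma PrW_2_minus_PrW_1:
  assumes "0 \<le> \<rho>" "\<rho> \<le> 1" "0 \<le> q" "q \<le> 1" "0 \<le> \<nu>" "\<nu> \<le> 1" "\<delta> > 0" "2 \<le> m"
    and r: "r = noisy_rate \<nu> \<rho>" and s: "s = noisy_rate \<nu> q" "s \<noteq> 0"
  shows "PrW (return_pmf (0, 1)) m \<rho> q \<nu> \<delta> 2 - PrW (return_pmf (0, 1)) m \<rho> q \<nu> \<delta> 1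
    = 1/2 * (real m * s * (1 - s) ^ (m - 1))
          * (1 - (1 - r) ^ (m - 1) * (1 - r + real m * r + r * (1 - s) / s))"
proof -
  obtain n where n: "m = Suc n"
    using \<open>2 \<le> m\<close> by (cases m) auto
  have "r \<in> {0..1}" "s \<in> {0..1}"
    unfolding r s using noisy_rate_bounds assms by auto
  have "PrW (return_pmf (0, 1)) m \<rho> q \<nu> \<delta> 2 - PrW (return_pmf (0, 1)) m \<rho> q \<nu> \<delta> 1
      = 1/2 * (1 - (\<Sum>i<2. pmf (binomial_pmf m r) i)) * (\<Sum>i<2. pmf (binomial_pmf m s) i)
        - 1/2 * (1 - (\<Sum>i<1. pmf (binomial_pmf m r) i)) * (\<Sum>i<1. pmf (binomial_pmf m s) i)"
    using assms by (simp only: PrW_binomial[of \<rho> q \<nu> \<delta> 2 m] PrW_binomial[of \<rho> q \<nu> \<delta> 1 m])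
  also have "\<dots> = 1/2 * (1 - ((1 - r) ^ m + real m * r * (1 - r) ^ n))
                      * ((1 - s) ^ m + real m * s * (1 - s) ^ n)
                - 1/2 * (1 - (1 - r) ^ m) * (1 - s) ^ m"
    using \<open>r \<in> {0..1}\<close> \<open>s \<in> {0..1}\<close> by (simp add: n numeral_2_eq_2)
  also have "\<dots> = 1/2 * (real m * s * (1 - s) ^ (m - 1))
          * (1 - (1 - r) ^ (m - 1) * (1 - r + real m * r + r * (1 - s) / s))"
    unfolding n using \<open>s \<noteq> 0\<close> by (simp add: field_simps)
  finally show ?thesis .
qed

lemma G_val_eq:
  assumes "noisy_rate \<nu> \<rho> \<noteq> 1"
  shows "G_val m \<rho> q \<nu> = real m * noisy_rate \<nu> q * (1 - noisy_rate \<nu> q) ^ (m - 1)"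
  using assms by (simp add: G_val_def Let_def)

lemma power_pred_times_affine_tendsto_0:
  fixes a b c :: real
  assumes "\<bar>a\<bar> < 1"
  shows "(\<lambda>n. a ^ (n - 1) * (b + c * real n)) \<longlonglongrightarrow> 0"
proof (rule LIMSEQ_imp_Suc)
  have "(\<lambda>n. (b + c) * a ^ n + c * (real n * a ^ n)) \<longlonglongrightarrow> 0"
    using assms
    by (intro tendsto_add_zero tendsto_mult_right_zero LIMSEQ_power_zero powser_times_n_limit_0) auto
  moreover have "a ^ (Suc n - 1) * (b + c * real (Suc n)) = (b + c) * a ^ n + c * (real n * a ^ n)" for n
    by (simp add: algebra_simps)
  ultimately show "(\<lambda>n. a ^ (Suc n - 1) * (b + c * real (Suc n))) \<longlonglongrightarrow> 0"
    by simp
qed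

theorem lemma5:
  fixes \<rho> q \<nu> \<delta> :: real and D :: "(nat \<times> nat) pmf"
  assumes "0 < q" and "q < \<rho>" and "\<rho> < 1" and "0 \<le> \<nu>" and "\<nu> < 1/2" and "\<delta> > 0"
    and "D = return_pmf (0, 1)"
  shows "(\<forall>m::nat. m \<ge> 2 \<longrightarrow>
            PrW D m \<rho> q \<nu> \<delta> 2 - PrW D m \<rho> q \<nu> \<delta> 1
            = 1/2 * G_val m \<rho> q \<nu> *
              (1 - (1 - noisy_rate \<nu> \<rho>) ^ (m - 1) *
                   (1 - noisy_rate \<nu> \<rho> + real m * noisy_rate \<nu> \<rho>
                    + noisy_rate \<nu> \<rho> * (1 - noisy_rate \<nu> q) / noisy_rate \<nu> q)))
       \<and> (\<exists>M. \<forall>m\<ge>M. PrW D m \<rho> q \<nu> \<delta> 2 - PrW D m \<rho> q \<nu> \<delta> 1 > 0)"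
    (is "(\<forall>m. m \<ge> 2 \<longrightarrow> ?\<Delta> m = 1/2 * G_val m \<rho> q \<nu> * (1 - ?E m)) \<and> _")
proof -
  define r s where "r = noisy_rate \<nu> \<rho>" and "s = noisy_rate \<nu> q"
  have r: "0 < r" "r < 1" and s: "0 < s" "s < 1"
    unfolding r_def s_def using noisy_rate_strict_bounds assms by auto
  have G: "G_val m \<rho> q \<nu> = real m * s * (1 - s) ^ (m - 1)" for m
    using G_val_eq r unfolding r_def s_def by simp
  have difference: "?\<Delta> m = 1/2 * G_val m \<rho> q \<nu> * (1 - ?E m)" if "m \<ge> 2" for m
    unfolding G assms(7) r_def[symmetric] s_def[symmetric]
    using PrW_2_minus_PrW_1[OF _ _ _ _ _ _ _ that r_def s_def] assms s by simp
  have "?E \<longlonglongrightarrow> 0"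
    using power_pred_times_affine_tendsto_0[of "1 - r" "1 - r + r * (1 - s) / s" r] r
    unfolding r_def s_def by (simp add: algebra_simps)
  then have "\<forall>\<^sub>F m in sequentially. ?E m < 1"
    by (rule order_tendstoD) simp
  then have "\<forall>\<^sub>F m in sequentially. ?\<Delta> m > 0"
    using eventually_ge_at_top[of 2]
  proof eventually_elim
    case (elim m)
    then have "1/2 * G_val m \<rho> q \<nu> * (1 - ?E m) > 0"
      unfolding G using s by simp
    with difference[OF \<open>m \<ge> 2\<close>] show ?case
      by linarith
  qed
  then show ?thesis
    using difference by (auto simp: eventually_sequentially)
qed

end
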